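(* Assume the abstract framework described in the context. For $f\in\mathcal{D}_2$ and $F\in\mathcal{H}_2$ with $\operatorname{Tr}_2F=f$, set $\operatorname{Tr}_2^\Omega\mathbf{D}^B_\Omega f=-\operatorname{Tr}_2F+\operatorname{Tr}_2\Pi^L(L(\mathbf{1}_\Omega F))$ and $\operatorname{Tr}_2^{\mathcal{C}}\mathbf{D}^B_{\mathcal{C}}f=-\operatorname{Tr}_2F+\operatorname{Tr}_2\Pi^L(L(\mathbf{1}_{\mathcal{C}}F))$. Then for all $f\in\mathcal{D}_2$ and $g\in\mathcal{N}_2$, $$\operatorname{Tr}_2^\Omega\mathbf{D}^B_\Omega f+\operatorname{Tr}_2^{\mathcal{C}}\mathbf{D}^B_{\mathcal{C}}f=-f,\qquad \mathbf{M}^\Omega_B\big((\mathbf{S}^L_\Omega g)|_\Omega\big)+\mathbf{M}^{\mathcal{C}}_B\big((\mathbf{S}^L_\Omega g)|_{\mathcal{C}}\big)=g,\qquad \mathbf{M}^\Omega_B(\mathbf{D}^B_\Omega f)-\mathbf{M}^{\mathcal{C}}_B(\mathbf{D}^B_{\mathcal{C}}f)=0.$$ If moreover there are bounded operators $\operatorname{Tr}_2^\Omega:\mathcal{H}_2^\Omega\to\mathcal{D}_2$ and $\operatorname{Tr}_2^{\mathcal{C}}:\mathcal{H}_2^{\mathcal{C}}\to\mathcal{D}_2$ such that $\operatorname{Tr}_2F=\operatorname{Tr}_2^\Omega(F|_\Omega)=\operatorname{Tr}_2^{\mathcal{C}}(F|_{\mathcal{C}})$ for all $F\in\mathcal{H}_2$,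 then in addition $\operatorname{Tr}_2^\Omega\big((\mathbf{S}^L_\Omega g)|_\Omega\big)-\operatorname{Tr}_2^{\mathcal{C}}\big((\mathbf{S}^L_\Omega g)|_{\mathcal{C}}\big)=0$ for all $g\in\mathcal{N}_2$.
   Context: Abstract framework. Let $\mathcal{H}_1,\mathcal{H}_2$ be complex Hilbert spaces, and for $j=1,2$ let $\widehat{\mathcal{H}}_j^\Omega$, $\widehat{\mathcal{H}}_j^{\mathcal{C}}$, $\widehat{\mathcal{D}}_j$ be normed (or seminormed) vector spaces, with bounded linear operators $\operatorname{Tr}_j:\mathcal{H}_j\to\widehat{\mathcal{D}}_j$ and bounded linear "restriction" operators $F\mapsto F|_\Omega\in\widehat{\mathcal{H}}_j^\Omega$, $F\mapsto F|_{\mathcal{C}}\in\widehat{\mathcal{H}}_j^{\mathcal{C}}$ on $\mathcal{H}_j$. Define $\mathcal{H}_j^\Omega=\{F|_\Omega:F\in\mathcal{H}_j\}$, $\mathcal{H}_j^{\mathcal{C}}$ and $\mathcal{D}_j=\{\operatorname{Tr}_jF:F\in\mathcal{H}_j\}$ with the quotient norms $\inf\|F\|_{\mathcal{H}_j}$ over preimages (modulo elements of norm zero). Let $\mathcal{N}_2=\mathcal{D}_1^*$, $\mathcal{N}_1=\mathcal{D}_2^*$ with duality pairings $\langle\cdot,\cdot\rangle$. Given are bounded bilinear forms $B:\mathcal{H}_1\times\mathcal{H}_2\to\mathbb{C}$, $B^\Omega:\mathcal{H}_1^\Omega\times\mathcal{H}_2^\Omega\to\mathbb{C}$, $B^{\mathcal{C}}:\mathcal{H}_1^{\mathcal{C}}\times\mathcal{H}_2^{\mathcal{C}}\to\mathbb{C}$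 and $\lambda>0$ such that for all $u\in\mathcal{H}_1$, $v\in\mathcal{H}_2$, $\varphi,\psi\in\mathcal{H}_j$: (i) $\sup_{w\ne0}|B(w,v)|/\|w\|_{\mathcal{H}_1}\ge\lambda\|v\|_{\mathcal{H}_2}$ and $\sup_{w\ne0}|B(u,w)|/\|w\|_{\mathcal{H}_2}\ge\lambda\|u\|_{\mathcal{H}_1}$; (ii) $B(u,v)=B^\Omega(u|_\Omega,v|_\Omega)+B^{\mathcal{C}}(u|_{\mathcal{C}},v|_{\mathcal{C}})$; (iii) if $\operatorname{Tr}_j\varphi=\operatorname{Tr}_j\psi$ there is $w\in\mathcal{H}_j$ with $w|_\Omega=\varphi|_\Omega$, $w|_{\mathcal{C}}=\psi|_{\mathcal{C}}$, $\operatorname{Tr}_jw=\operatorname{Tr}_j\varphi$. Definitions (for $\mathcal{O}\in\{\Omega,\mathcal{C}\}$): for $u\in\mathcal{H}_2^{\mathcal{O}}$, $(Lu)|_{\mathcal{O}}=0$ means $B^{\mathcal{O}}(\varphi|_{\mathcal{O}},u)=0$ whenever $\varphi\in\mathcal{H}_1$, $\operatorname{Tr}_1\varphi=0$; for such $u$, $\mathbf{M}^{\mathcal{O}}_Bu\in\mathcal{N}_2$ is defined by $\langle\operatorname{Tr}_1\varphi,\mathbf{M}^{\mathcal{O}}_Bu\rangle=B^{\mathcal{O}}(\varphi|_{\mathcal{O}},u)$ for all $\varphi\in\mathcal{H}_1$. For $u\in\mathcal{H}_2^{\mathcal{O}}$, $L(u\mathbf{1}_{\mathcal{O}})\in\mathcal{H}_1^*$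 is $\langle\varphi,L(u\mathbf{1}_{\mathcal{O}})\rangle=B^{\mathcal{O}}(\varphi|_{\mathcal{O}},u)$; $L(\mathbf{1}_{\mathcal{O}}F)=L(F|_{\mathcal O}\mathbf 1_{\mathcal O})$ for $F\in\mathcal{H}_2$. Newton potential: $\Pi^LH\in\mathcal{H}_2$ ($H\in\mathcal{H}_1^*$) is the unique element with $B(\varphi,\Pi^LH)=\langle\varphi,H\rangle$ for all $\varphi\in\mathcal{H}_1$. Single layer: for $g\in\mathcal{N}_2$, $\mathbf{S}^L_\Omega g\in\mathcal{H}_2$ is unique with $B(\varphi,\mathbf{S}^L_\Omega g)=\langle\operatorname{Tr}_1\varphi,g\rangle$ for all $\varphi\in\mathcal{H}_1$. Double layer: $\mathbf{D}^B_{\mathcal{O}}f=-F|_{\mathcal{O}}+(\Pi^L(L(\mathbf{1}_{\mathcal{O}}F)))|_{\mathcal{O}}\in\mathcal H_2^{\mathcal O}$ for any $F\in\mathcal H_2$ with $\operatorname{Tr}_2F=f\in\mathcal{D}_2$ (independent of the choice of $F$). The restrictions $(\mathbf S^L_\Omega g)|_{\mathcal O}$ and $\mathbf D^B_{\mathcal O}f$ satisfy $(Lu)|_{\mathcal O}=0$, so their Neumann boundary values are defined. *)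

theory Defs
  imports Complex_Main "HOL-Library.Extended_Real"
begin

text \<open>Complex vector spaces are modelled as types of class ab_group_add together with
  an explicit complex scalar multiplication (predicate Vector_Spaces.vector_space).\<close>

definition hnorm :: "('h \<Rightarrow> 'h \<Rightarrow> complex) \<Rightarrow> 'h \<Rightarrow> real" where
  "hnorm ip x = sqrt (Re (ip x x))"

definition complex_hilbert :: "(complex \<Rightarrow> 'h::ab_group_add \<Rightarrow> 'h) \<Rightarrow> ('h \<Rightarrow> 'h \<Rightarrow> complex) \<Rightarrow> bool" where
  "complex_hilbert s ip \<longleftrightarrow>
     Vector_Spaces.vector_space s
   \<and> (\<forall>x y z. ip (x + y) z = ip x z + ip y z)
   \<and> (\<forall>c x y. ip (s c x) y = c * ip x y)
   \<and> (\<forall>x y. ip y x = cnj (ip x y))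
   \<and> (\<forall>x. 0 \<le> Re (ip x x))
   \<and> (\<forall>x. ip x x = 0 \<longrightarrow> x = 0)
   \<and> (\<forall>X :: nat \<Rightarrow> 'h. (\<forall>e>0. \<exists>N. \<forall>m\<ge>N. \<forall>n\<ge>N. hnorm ip (X m - X n) < e)
          \<longrightarrow> (\<exists>l. (\<lambda>n. hnorm ip (X n - l)) \<longlonglongrightarrow> 0))"

definition seminormed :: "(complex \<Rightarrow> 'v::ab_group_add \<Rightarrow> 'v) \<Rightarrow> ('v \<Rightarrow> real) \<Rightarrow> bool" where
  "seminormed s n \<longleftrightarrow> Vector_Spaces.vector_space s
   \<and> (\<forall>x. 0 \<le> n x) \<and> (\<forall>x y. n (x + y) \<le> n x + n y) \<and> (\<forall>c x. n (s c x) = cmod c * n x)"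

definition bounded_op :: "(complex \<Rightarrow> 'a::ab_group_add \<Rightarrow> 'a) \<Rightarrow> ('a \<Rightarrow> real)
    \<Rightarrow> (complex \<Rightarrow> 'b::ab_group_add \<Rightarrow> 'b) \<Rightarrow> ('b \<Rightarrow> real) \<Rightarrow> ('a \<Rightarrow> 'b) \<Rightarrow> bool" where
  "bounded_op s1 n1 s2 n2 T \<longleftrightarrow> Vector_Spaces.linear s1 s2 T \<and> (\<exists>C. \<forall>x. n2 (T x) \<le> C * n1 x)"

definition bounded_bilinear_form :: "(complex \<Rightarrow> 'a::ab_group_add \<Rightarrow> 'a) \<Rightarrow> ('a \<Rightarrow> real)
    \<Rightarrow> (complex \<Rightarrow> 'b::ab_group_add \<Rightarrow> 'b) \<Rightarrow> ('b \<Rightarrow> real) \<Rightarrow> ('a \<Rightarrow> 'b \<Rightarrow> complex) \<Rightarrow> bool" where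
  "bounded_bilinear_form s1 n1 s2 n2 B \<longleftrightarrow>
     (\<forall>u. Vector_Spaces.linear s2 (*) (B u)) \<and> (\<forall>v. Vector_Spaces.linear s1 (*) (\<lambda>u. B u v))
   \<and> (\<exists>C. \<forall>u v. cmod (B u v) \<le> C * n1 u * n2 v)"

definition qnorm :: "('h \<Rightarrow> 'v) \<Rightarrow> ('h \<Rightarrow> real) \<Rightarrow> 'v \<Rightarrow> real" where
  "qnorm r n a = (INF F\<in>{F. r F = a}. n F)"

text \<open>Membership in N_2 = D_1^*: a functional on D_1 = range Tr1 (values off D_1 are irrelevant),
  linear and bounded w.r.t. the quotient norm of D_1.\<close>
definition in_N2 :: "(complex \<Rightarrow> 'h1::ab_group_add \<Rightarrow> 'h1) \<Rightarrow> ('h1 \<Rightarrow> 'h1 \<Rightarrow> complex)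
    \<Rightarrow> ('h1 \<Rightarrow> 'd1) \<Rightarrow> ('d1 \<Rightarrow> complex) \<Rightarrow> bool" where
  "in_N2 s1 ip1 Tr1 g \<longleftrightarrow>
     (\<forall>\<phi> \<psi> c. g (Tr1 (\<phi> + s1 c \<psi>)) = g (Tr1 \<phi>) + c * g (Tr1 \<psi>))
   \<and> (\<exists>C. \<forall>\<phi>. cmod (g (Tr1 \<phi>)) \<le> C * qnorm Tr1 (hnorm ip1) (Tr1 \<phi>))"

definition newton_pot :: "('h1 \<Rightarrow> 'h2 \<Rightarrow> complex) \<Rightarrow> ('h1 \<Rightarrow> complex) \<Rightarrow> 'h2" where
  "newton_pot B H = (THE u. \<forall>\<phi>. B \<phi> u = H \<phi>)"

text \<open>L(u 1_O) as an element of H_1^*: phi maps to B^O(phi|_O, u).\<close>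
definition L_ind :: "('o1 \<Rightarrow> 'o2 \<Rightarrow> complex) \<Rightarrow> ('h1 \<Rightarrow> 'o1) \<Rightarrow> 'o2 \<Rightarrow> ('h1 \<Rightarrow> complex)" where
  "L_ind BO rO1 u = (\<lambda>\<phi>. BO (rO1 \<phi>) u)"

definition single_layer :: "('h1 \<Rightarrow> 'h2 \<Rightarrow> complex) \<Rightarrow> ('h1 \<Rightarrow> 'd1) \<Rightarrow> ('d1 \<Rightarrow> complex) \<Rightarrow> 'h2" where
  "single_layer B Tr1 g = (THE u. \<forall>\<phi>. B \<phi> u = g (Tr1 \<phi>))"

definition conormal :: "('o1 \<Rightarrow> 'o2 \<Rightarrow> complex) \<Rightarrow> ('h1 \<Rightarrow> 'o1) \<Rightarrow> ('h1 \<Rightarrow> 'd1) \<Rightarrow> 'o2 \<Rightarrow> ('d1 \<Rightarrow> complex)" where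
  "conormal BO rO1 Tr1 u =
     (THE g. (\<forall>\<phi>. g (Tr1 \<phi>) = BO (rO1 \<phi>) u) \<and> (\<forall>x. x \<notin> range Tr1 \<longrightarrow> g x = 0))"

definition double_layer :: "('h1 \<Rightarrow> 'h2 \<Rightarrow> complex) \<Rightarrow> ('o1 \<Rightarrow> 'o2::ab_group_add \<Rightarrow> complex)
    \<Rightarrow> ('h1 \<Rightarrow> 'o1) \<Rightarrow> ('h2 \<Rightarrow> 'o2) \<Rightarrow> ('h2 \<Rightarrow> 'd2) \<Rightarrow> 'd2 \<Rightarrow> 'o2" where
  "double_layer B BO rO1 rO2 Tr2 f =
     (let F = (SOME F. Tr2 F = f) in - rO2 F + rO2 (newton_pot B (L_ind BO rO1 (rO2 F))))"

definition trace_double_layer :: "('h1 \<Rightarrow> 'h2 \<Rightarrow> complex) \<Rightarrow> ('o1 \<Rightarrow> 'o2 \<Rightarrow> complex)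
    \<Rightarrow> ('h1 \<Rightarrow> 'o1) \<Rightarrow> ('h2 \<Rightarrow> 'o2) \<Rightarrow> ('h2 \<Rightarrow> 'd2::ab_group_add) \<Rightarrow> 'd2 \<Rightarrow> 'd2" where
  "trace_double_layer B BO rO1 rO2 Tr2 f =
     (let F = (SOME F. Tr2 F = f) in - Tr2 F + Tr2 (newton_pot B (L_ind BO rO1 (rO2 F))))"

definition partial_trace :: "(complex \<Rightarrow> 'h2::ab_group_add \<Rightarrow> 'h2) \<Rightarrow> ('h2 \<Rightarrow> 'h2 \<Rightarrow> complex)
    \<Rightarrow> ('h2 \<Rightarrow> 'o2) \<Rightarrow> (complex \<Rightarrow> 'd2::ab_group_add \<Rightarrow> 'd2) \<Rightarrow> ('h2 \<Rightarrow> 'd2) \<Rightarrow> ('o2 \<Rightarrow> 'd2) \<Rightarrow> bool" where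
  "partial_trace s2 ip2 rO2 sD2 Tr2 TrO \<longleftrightarrow>
     (\<forall>F. TrO (rO2 F) \<in> range Tr2)
   \<and> (\<forall>F G c. TrO (rO2 (F + s2 c G)) = TrO (rO2 F) + sD2 c (TrO (rO2 G)))
   \<and> (\<exists>C. \<forall>F. qnorm Tr2 (hnorm ip2) (TrO (rO2 F)) \<le> C * qnorm rO2 (hnorm ip2) (rO2 F))
   \<and> (\<forall>F. Tr2 F = TrO (rO2 F))"

end

theory Submission
  imports Defs
begin

text \<open>
  By the inf-sup conditions, the Babuska-Lax-Milgram theorem provides for every bounded functional
  \<open>H\<close> on \<open>H\<^sub>1\<close> exactly one \<open>u\<close> with \<open>B(\<cdot>, u) = H\<close>; this is what makes \<open>\<Pi>\<^sup>L\<close> and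
  \<open>S\<^sup>L\<^sub>\<Omega>\<close> meaningful. Uniqueness together with \<open>B = B\<^sup>\<Omega> + B\<^sup>\<C>\<close> gives
  \<open>\<Pi>\<^sup>L(L(\<one>\<^sub>\<Omega>F)) + \<Pi>\<^sup>L(L(\<one>\<^sub>\<C>F)) = F\<close>, which yields the identities for the double layer
  potential; the splitting applied to \<open>S\<^sup>L\<^sub>\<Omega>g\<close> yields the one for the single layer potential,
  and the last identity is immediate because both partial traces agree with \<open>Tr\<^sub>2\<close>.
  Conormal derivatives are evaluated through the gluing hypothesis (iii): if \<open>B\<^sup>\<Omega>(\<phi>|\<^sub>\<Omega>, u)\<close>
  differs from a function of \<open>Tr\<^sub>1\<phi>\<close> by a function of \<open>\<phi>|\<^sub>\<C>\<close>, then gluing \<open>\<phi>\<close> on \<open>\<Omega>\<close>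
  with any \<open>\<psi>\<close> of the same trace on \<open>\<C>\<close> shows that it depends on \<open>Tr\<^sub>1\<phi>\<close> only.

  The spaces being abstract, existence in the Babuska-Lax-Milgram theorem is derived from the
  Riesz representation theorem, proved via the projection theorem for closed subspaces.
\<close>


lemma qnorm_nonneg: "(\<And>x. 0 \<le> n x) \<Longrightarrow> 0 \<le> qnorm r n (r x)"
  unfolding qnorm_def by (rule cINF_greatest) auto

lemma qnorm_le: "(\<And>x. 0 \<le> n x) \<Longrightarrow> qnorm r n (r x) \<le> n x"
  unfolding qnorm_def by (rule cINF_lower) (auto intro: bdd_belowI[of _ 0])

lemma vector_space_complex_mult: "vector_space ((*) :: complex \<Rightarrow> complex \<Rightarrow> complex)"
  by unfold_locales (simp_all add: algebra_simps)

section \<open>Complex Hilbert spaces\<close>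

locale complex_hilbert_space =
  fixes s :: "complex \<Rightarrow> 'h::ab_group_add \<Rightarrow> 'h" and ip :: "'h \<Rightarrow> 'h \<Rightarrow> complex"
  assumes complex_hilbert: "complex_hilbert s ip"
begin

sublocale V: vector_space s
  using complex_hilbert unfolding complex_hilbert_def by blast

lemma inner_add_left: "ip (x + y) z = ip x z + ip y z"
  and inner_scale_left: "ip (s c x) y = c * ip x y"
  and inner_commute: "ip y x = cnj (ip x y)"
  and Re_inner_self_nonneg: "0 \<le> Re (ip x x)"
  and inner_self_eq_zeroD: "ip x x = 0 \<Longrightarrow> x = 0"
  and Cauchy_hnorm_convergent: "\<forall>e>0. \<exists>N. \<forall>m\<ge>N. \<forall>n\<ge>N. hnorm ip (X m - X n) < e
          \<Longrightarrow> \<exists>l. (\<lambda>n. hnorm ip (X n - l)) \<longlonglongrightarrow> 0"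
  using complex_hilbert unfolding complex_hilbert_def by blast+

lemma inner_add_right: "ip z (x + y) = ip z x + ip z y"
  by (metis complex_cnj_add complex_cnj_cnj inner_add_left inner_commute)

lemma inner_scale_right: "ip x (s c y) = cnj c * ip x y"
  by (metis complex_cnj_mult complex_cnj_cnj inner_scale_left inner_commute)

lemma additive_inner_left: "additive (\<lambda>x. ip x z)"
  by unfold_locales (rule inner_add_left)

lemma additive_inner_right: "additive (ip z)"
  by unfold_locales (rule inner_add_right)

lemmas inner_diff_left = additive.diff[OF additive_inner_left]
  and inner_minus_left = additive.minus[OF additive_inner_left]
  and inner_diff_right = additive.diff[OF additive_inner_right]
  and inner_minus_right = additive.minus[OF additive_inner_right]
  and inner_zero_right[simp] = additive.zero[OF additive_inner_right]

lemma inner_self_real: "ip x x = of_real (Re (ip x x))"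
  using inner_commute[of x x] by (simp add: complex_eq_iff)

lemma hnorm_nonneg: "0 \<le> hnorm ip x"
  by (simp add: hnorm_def Re_inner_self_nonneg)

lemma power2_hnorm: "(hnorm ip x)\<^sup>2 = Re (ip x x)"
  by (simp add: hnorm_def Re_inner_self_nonneg)

lemma hnorm_eq_zero_iff [simp]: "hnorm ip x = 0 \<longleftrightarrow> x = 0"
  using inner_self_real[of x] inner_self_eq_zeroD[of x] by (auto simp: hnorm_def)

lemma hnorm_pos: "x \<noteq> 0 \<Longrightarrow> 0 < hnorm ip x"
  using hnorm_nonneg[of x] by (simp add: order_less_le)

lemma Re_inner_self_pos: "x \<noteq> 0 \<Longrightarrow> 0 < Re (ip x x)"
  using hnorm_pos[of x] by (simp flip: power2_hnorm)

lemma Re_inner_self_minus_projection: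
  fixes x y :: 'h
  assumes "y \<noteq> 0"
  defines "t \<equiv> ip x y / ip y y"
  shows "Re (ip (x - s t y) (x - s t y)) = Re (ip x x) - (cmod (ip x y))\<^sup>2 / Re (ip y y)"
proof -
  define a where "a = ip x y"
  define r where "r = Re (ip y y)"
  have yy: "ip y y = of_real r" unfolding r_def by (rule inner_self_real)
  have "r \<noteq> 0" using Re_inner_self_pos[OF assms(1)] by (simp add: r_def)
  have yx: "ip y x = cnj a" unfolding a_def by (rule inner_commute)
  have t: "t = a / of_real r" by (simp add: t_def a_def yy)
  have "ip (x - s t y) (x - s t y) = ip x x - cnj t * a - t * ip y x + t * cnj t * ip y y"
    by (simp add: a_def inner_diff_left inner_diff_right inner_scale_left inner_scale_right
        algebra_simps)
  also have "\<dots> = ip x x - a * cnj a / of_real r"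
    using \<open>r \<noteq> 0\<close> by (simp add: t yx yy)
  also have "\<dots> = ip x x - of_real ((cmod a)\<^sup>2 / r)"
    by (simp add: complex_mult_cnj cmod_power2)
  finally show ?thesis by (simp add: a_def r_def)
qed

lemma Cauchy_Schwarz: "cmod (ip x y) \<le> hnorm ip x * hnorm ip y"
proof (cases "y = 0")
  case False
  have "0 \<le> Re (ip x x) - (cmod (ip x y))\<^sup>2 / Re (ip y y)"
    using Re_inner_self_minus_projection[OF False, of x]
      Re_inner_self_nonneg[of "x - s (ip x y / ip y y) y"] by linarith
  then have "(cmod (ip x y))\<^sup>2 \<le> (hnorm ip x * hnorm ip y)\<^sup>2"
    using Re_inner_self_pos[OF False] by (simp add: field_simps power_mult_distrib power2_hnorm)
  then show ?thesis by (rule power2_le_imp_le) (simp add: hnorm_nonneg)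
qed (simp add: hnorm_nonneg)

lemma hnorm_triangle: "hnorm ip (x + y) \<le> hnorm ip x + hnorm ip y"
proof (rule power2_le_imp_le)
  have "Re (ip x y) \<le> hnorm ip x * hnorm ip y"
    using complex_Re_le_cmod[of "ip x y"] Cauchy_Schwarz[of x y] by linarith
  moreover have "(hnorm ip (x + y))\<^sup>2 = (hnorm ip x)\<^sup>2 + 2 * Re (ip x y) + (hnorm ip y)\<^sup>2"
    using inner_commute[of x y] by (simp add: power2_hnorm inner_add_left inner_add_right)
  ultimately show "(hnorm ip (x + y))\<^sup>2 \<le> (hnorm ip x + hnorm ip y)\<^sup>2"
    by (simp add: power2_sum)
qed (simp add: hnorm_nonneg add_nonneg_nonneg)

lemma hnorm_minus_commute: "hnorm ip (x - y) = hnorm ip (y - x)"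
  using inner_minus_left[of "x - y" "x - y"] inner_minus_right[of "y - x" "x - y"]
  by (simp add: hnorm_def)

lemma hnorm_triangle_diff: "hnorm ip (x - z) \<le> hnorm ip (x - y) + hnorm ip (y - z)"
  using hnorm_triangle[of "x - y" "y - z"] by simp

lemma hnorm_scale: "hnorm ip (s c x) = cmod c * hnorm ip x"
proof -
  have "ip (s c x) (s c x) = (c * cnj c) * ip x x"
    by (simp add: inner_scale_left inner_scale_right)
  then have "Re (ip (s c x) (s c x)) = (cmod c)\<^sup>2 * Re (ip x x)"
    by (simp add: complex_mult_cnj cmod_power2)
  then show ?thesis by (simp add: hnorm_def real_sqrt_mult)
qed

lemma parallelogram:
  "(hnorm ip (x + y))\<^sup>2 + (hnorm ip (x - y))\<^sup>2 = 2 * (hnorm ip x)\<^sup>2 + 2 * (hnorm ip y)\<^sup>2"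
  by (simp add: power2_hnorm inner_add_left inner_add_right inner_diff_left inner_diff_right)

lemma tendsto_bounded_additive:
  assumes "additive F" and bound: "\<And>x. cmod (F x) \<le> C * hnorm ip x"
    and lim: "(\<lambda>n. hnorm ip (X n - l)) \<longlonglongrightarrow> 0"
  shows "(\<lambda>n. F (X n)) \<longlonglongrightarrow> F l"
proof (rule LIM_zero_cancel, rule tendsto_0_le[OF lim], intro always_eventually allI)
  fix n
  show "norm (F (X n) - F l) \<le> norm (hnorm ip (X n - l)) * C"
    using bound[of "X n - l"] additive.diff[OF \<open>additive F\<close>]
    by (simp add: hnorm_nonneg mult.commute)
qed

lemma convergent_imp_Cauchy:
  assumes "(\<lambda>n. hnorm ip (X n - l)) \<longlonglongrightarrow> 0"
  shows "\<forall>e>0. \<exists>N. \<forall>m\<ge>N. \<forall>n\<ge>N. hnorm ip (X m - X n) < e"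
proof (intro allI impI)
  fix e :: real assume "e > 0"
  then obtain N where N: "\<And>n. n \<ge> N \<Longrightarrow> hnorm ip (X n - l) < e / 2"
    using LIMSEQ_D[OF assms, of "e / 2"] hnorm_nonneg by fastforce
  have "hnorm ip (X m - X n) < e" if "N \<le> m" "N \<le> n" for m n
    using hnorm_triangle_diff[of "X m" "X n" l] hnorm_minus_commute[of "X n" l] N[of m] N[of n] that
    by linarith
  then show "\<exists>N. \<forall>m\<ge>N. \<forall>n\<ge>N. hnorm ip (X m - X n) < e" by blast
qed

definition closed_subspace :: "'h set \<Rightarrow> bool" where
  "closed_subspace M \<longleftrightarrow> 0 \<in> M \<and> (\<forall>x\<in>M. \<forall>y\<in>M. x + y \<in> M) \<and> (\<forall>c. \<forall>x\<in>M. s c x \<in> M)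
     \<and> (\<forall>X l. (\<forall>n. X n \<in> M) \<and> (\<lambda>n. hnorm ip (X n - l)) \<longlonglongrightarrow> 0 \<longrightarrow> l \<in> M)"

lemma closed_subspace_midpoint_bound:
  assumes M: "closed_subspace M" "m \<in> M" "m' \<in> M"
    and dist_ge: "\<forall>z\<in>M. d \<le> hnorm ip (x - z)" and "0 \<le> d"
  shows "(hnorm ip (m - m'))\<^sup>2 \<le> 2 * (hnorm ip (x - m))\<^sup>2 + 2 * (hnorm ip (x - m'))\<^sup>2 - 4 * d\<^sup>2"
proof -
  define z where "z = s (1/2) (m + m')"
  have "z \<in> M" using M unfolding closed_subspace_def z_def by blast
  have "s 2 (x - z) = s 2 x - (m + m')"
    by (simp add: z_def V.scale_right_diff_distrib V.scale_scale)
  then have "(x - m) + (x - m') = s 2 (x - z)"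
    using V.scale_left_distrib[of 1 1 x] by (simp add: algebra_simps)
  then have "2 * d \<le> hnorm ip ((x - m) + (x - m'))"
    using dist_ge \<open>z \<in> M\<close> by (simp add: hnorm_scale)
  then have "(2 * d)\<^sup>2 \<le> (hnorm ip ((x - m) + (x - m')))\<^sup>2"
    using \<open>0 \<le> d\<close> by (intro power_mono) auto
  moreover have "hnorm ip ((x - m) - (x - m')) = hnorm ip (m - m')"
    using hnorm_minus_commute[of m' m] by simp
  ultimately show ?thesis
    using parallelogram[of "x - m" "x - m'"] by (simp add: power_mult_distrib)
qed

lemma minimizing_sequence_Cauchy:
  assumes "closed_subspace M" and X: "\<And>n. X n \<in> M"
    and dist_ge: "\<forall>z\<in>M. d \<le> hnorm ip (x - z)" and "0 \<le> d"
    and dist_lt: "\<And>n. hnorm ip (x - X n) < d + inverse (Suc n)"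
  shows "\<forall>e>0. \<exists>N. \<forall>m\<ge>N. \<forall>n\<ge>N. hnorm ip (X m - X n) < e"
proof (intro allI impI)
  fix e :: real assume "e > 0"
  define \<delta> where "\<delta> n = inverse (real (Suc n))" for n
  have \<delta>: "0 < \<delta> n" "\<delta> n \<le> 1" for n
    by (simp_all add: \<delta>_def inverse_le_1_iff)
  have sq: "(hnorm ip (x - X n))\<^sup>2 \<le> d\<^sup>2 + (2 * d + 1) * \<delta> n" for n
  proof -
    have "(hnorm ip (x - X n))\<^sup>2 \<le> (d + \<delta> n)\<^sup>2"
      using dist_lt[of n] hnorm_nonneg by (intro power_mono) (auto simp: \<delta>_def)
    moreover have "\<delta> n * \<delta> n \<le> \<delta> n" using \<delta>[of n] by (simp add: mult_left_le)
    ultimately show ?thesis by (simp add: power2_eq_square algebra_simps)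
  qed
  obtain N where N: "(8 * d + 4) / e\<^sup>2 < real N" using reals_Archimedean2 by blast
  have "(8 * d + 4) * \<delta> N < e\<^sup>2"
  proof -
    have "8 * d + 4 < e\<^sup>2 * real N" using N \<open>e > 0\<close> by (simp add: field_simps)
    also have "\<dots> < e\<^sup>2 * real (Suc N)" using \<open>e > 0\<close> by simp
    finally have "8 * d + 4 < e\<^sup>2 * real (Suc N)" .
    then show ?thesis using \<open>e > 0\<close> by (simp add: \<delta>_def field_simps)
  qed
  have "hnorm ip (X m - X n) < e" if "N \<le> m" "N \<le> n" for m n
  proof -
    have "\<delta> m \<le> \<delta> N" "\<delta> n \<le> \<delta> N" using that by (simp_all add: \<delta>_def le_imp_inverse_le)
    have "(hnorm ip (X m - X n))\<^sup>2 \<le> (4 * d + 2) * (\<delta> m + \<delta> n)"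
      using closed_subspace_midpoint_bound[OF assms(1) X X dist_ge \<open>0 \<le> d\<close>, of m n]
        sq[of m] sq[of n] by (simp add: algebra_simps)
    also have "\<dots> \<le> (4 * d + 2) * (\<delta> N + \<delta> N)"
      using \<open>\<delta> m \<le> \<delta> N\<close> \<open>\<delta> n \<le> \<delta> N\<close> \<open>0 \<le> d\<close> by (intro mult_left_mono) auto
    also have "\<dots> = (8 * d + 4) * \<delta> N" by (simp add: algebra_simps)
    also have "\<dots> < e\<^sup>2" by fact
    finally show ?thesis using \<open>e > 0\<close> by (simp add: power2_less_imp_less)
  qed
  then show "\<exists>N. \<forall>m\<ge>N. \<forall>n\<ge>N. hnorm ip (X m - X n) < e" by blast
qed

lemma closest_point_exists:
  assumes M: "closed_subspace M"
  shows "\<exists>m\<in>M. \<forall>z\<in>M. hnorm ip (x - m) \<le> hnorm ip (x - z)"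
proof -
  define d where "d = (INF z\<in>M. hnorm ip (x - z))"
  have "M \<noteq> {}" using M unfolding closed_subspace_def by blast
  have bdd: "bdd_below ((\<lambda>z. hnorm ip (x - z)) ` M)"
    by (rule bdd_belowI2[of _ 0]) (rule hnorm_nonneg)
  have dist_ge: "\<forall>z\<in>M. d \<le> hnorm ip (x - z)"
    unfolding d_def using bdd by (auto intro: cINF_lower)
  have "0 \<le> d"
    unfolding d_def using \<open>M \<noteq> {}\<close> by (rule cINF_greatest) (rule hnorm_nonneg)
  have "\<exists>m\<in>M. hnorm ip (x - m) < d + inverse (Suc n)" for n
    using cINF_less_iff[OF \<open>M \<noteq> {}\<close> bdd, of "d + inverse (Suc n)"] by (simp add: d_def)
  then obtain X where X: "\<And>n. X n \<in> M" "\<And>n. hnorm ip (x - X n) < d + inverse (Suc n)"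
    by metis
  obtain m where lim: "(\<lambda>n. hnorm ip (X n - m)) \<longlonglongrightarrow> 0"
    using Cauchy_hnorm_convergent[OF minimizing_sequence_Cauchy[OF M X(1) dist_ge \<open>0 \<le> d\<close> X(2)]]
    by blast
  have "m \<in> M" using M X(1) lim unfolding closed_subspace_def by blast
  have "hnorm ip (x - m) \<le> d"
  proof (rule LIMSEQ_le_const)
    show "(\<lambda>n. d + inverse (Suc n) + hnorm ip (X n - m)) \<longlonglongrightarrow> d"
      using tendsto_add[OF tendsto_add[OF tendsto_const LIMSEQ_inverse_real_of_nat] lim] by simp
    show "\<exists>N. \<forall>n\<ge>N. hnorm ip (x - m) \<le> d + inverse (Suc n) + hnorm ip (X n - m)"
    proof (intro exI allI impI)
      fix n
      show "hnorm ip (x - m) \<le> d + inverse (Suc n) + hnorm ip (X n - m)"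
        using hnorm_triangle_diff[of x m "X n"] X(2)[of n] by linarith
    qed
  qed
  then show ?thesis using \<open>m \<in> M\<close> dist_ge by force
qed

lemma closest_point_orthogonal:
  assumes M: "closed_subspace M" "m \<in> M" "z \<in> M"
    and closest: "\<forall>z\<in>M. hnorm ip (x - m) \<le> hnorm ip (x - z)"
  shows "ip (x - m) z = 0"
proof (cases "z = 0")
  case False
  define y where "y = x - m"
  define t where "t = ip y z / ip z z"
  have "m + s t z \<in> M" using M unfolding closed_subspace_def by blast
  then have "hnorm ip y \<le> hnorm ip (y - s t z)"
    using closest unfolding y_def by (metis diff_diff_eq)
  then have "(hnorm ip y)\<^sup>2 \<le> (hnorm ip (y - s t z))\<^sup>2"
    using hnorm_nonneg by (intro power_mono) auto
  then have "(cmod (ip y z))\<^sup>2 / Re (ip z z) \<le> 0"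
    using Re_inner_self_minus_projection[OF False, of y] by (simp add: power2_hnorm t_def)
  then show ?thesis
    using Re_inner_self_pos[OF False] by (simp add: divide_le_0_iff y_def)
qed simp

lemma orthogonal_projection_exists:
  assumes "closed_subspace M"
  shows "\<exists>m\<in>M. \<forall>z\<in>M. ip (x - m) z = 0"
  using closest_point_exists[OF assms] closest_point_orthogonal[OF assms] by blast

lemma kernel_closed_subspace:
  assumes lin: "Vector_Spaces.linear s (*) H" and bound: "\<And>x. cmod (H x) \<le> C * hnorm ip x"
  shows "closed_subspace {x. H x = 0}"
proof -
  interpret H: module_hom s "(*)" H using lin by (simp add: linear_iff_module_hom)
  have "l \<in> {x. H x = 0}"
    if "\<forall>n. X n \<in> {x. H x = 0}" "(\<lambda>n. hnorm ip (X n - l)) \<longlonglongrightarrow> 0" for X l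
  proof -
    have "(\<lambda>n. H (X n)) \<longlonglongrightarrow> H l"
      by (rule tendsto_bounded_additive[OF _ bound that(2)]) (simp add: additive_def H.add)
    with that(1) show ?thesis by (simp add: LIMSEQ_const_iff)
  qed
  then show ?thesis unfolding closed_subspace_def by (auto simp: H.add H.scale)
qed

theorem Riesz_representation:
  assumes lin: "Vector_Spaces.linear s (*) H" and bound: "\<And>x. cmod (H x) \<le> C * hnorm ip x"
  shows "\<exists>r. \<forall>x. H x = ip x r"
proof (cases "\<forall>x. H x = 0")
  case False
  interpret H: module_hom s "(*)" H using lin by (simp add: linear_iff_module_hom)
  obtain z where "H z \<noteq> 0" using False by blast
  obtain m where "H m = 0" and orth: "\<And>k. H k = 0 \<Longrightarrow> ip (z - m) k = 0"
    using orthogonal_projection_exists[OF kernel_closed_subspace[OF lin bound], of z] by auto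
  define y where "y = z - m"
  have "H y \<noteq> 0" using \<open>H z \<noteq> 0\<close> \<open>H m = 0\<close> by (simp add: y_def H.diff)
  then have "ip y y \<noteq> 0" using inner_self_eq_zeroD by force
  have "H x = ip x (s (cnj (H y / ip y y)) y)" for x
  proof -
    have "H (x - s (H x / H y) y) = 0" using \<open>H y \<noteq> 0\<close> by (simp add: H.diff H.scale)
    then have "ip (x - s (H x / H y) y) y = 0"
      using orth inner_commute unfolding y_def by (metis complex_cnj_zero)
    then show ?thesis
      using \<open>H y \<noteq> 0\<close> \<open>ip y y \<noteq> 0\<close>
      by (simp add: inner_diff_left inner_scale_left inner_scale_right field_simps)
  qed
  then show ?thesis by blast
qed (auto intro!: exI[of _ 0])

lemma in_N2_linear:
  assumes "in_N2 s ip Tr g"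
  shows "Vector_Spaces.linear s (*) (\<lambda>\<phi>. g (Tr \<phi>))"
proof -
  have lin: "g (Tr (\<phi> + s c \<psi>)) = g (Tr \<phi>) + c * g (Tr \<psi>)" for \<phi> \<psi> c
    using assms unfolding in_N2_def by blast
  have "g (Tr 0) = 0" using lin[of 0 1 0] by simp
  then show ?thesis
    using lin[of _ 1] lin[of 0] V.vector_space_axioms vector_space_complex_mult
    by (simp add: Vector_Spaces.linear_iff)
qed

lemma in_N2_bounded:
  assumes "in_N2 s ip Tr g"
  shows "\<exists>C. \<forall>\<phi>. cmod (g (Tr \<phi>)) \<le> C * hnorm ip \<phi>"
proof -
  obtain C where C: "\<And>\<phi>. cmod (g (Tr \<phi>)) \<le> C * qnorm Tr (hnorm ip) (Tr \<phi>)"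
    using assms unfolding in_N2_def by blast
  have "cmod (g (Tr \<phi>)) \<le> max C 0 * hnorm ip \<phi>" for \<phi>
  proof -
    have "0 \<le> qnorm Tr (hnorm ip) (Tr \<phi>)" by (rule qnorm_nonneg) (rule hnorm_nonneg)
    then have "C * qnorm Tr (hnorm ip) (Tr \<phi>) \<le> max C 0 * qnorm Tr (hnorm ip) (Tr \<phi>)"
      by (intro mult_right_mono) auto
    also have "\<dots> \<le> max C 0 * hnorm ip \<phi>"
      by (intro mult_left_mono qnorm_le hnorm_nonneg) auto
    finally show ?thesis using C[of \<phi>] by linarith
  qed
  then show ?thesis by blast
qed

end

section \<open>The Babuska-Lax-Milgram theorem\<close>

lemma SUP_ratio_le:
  fixes f n :: "'a::zero \<Rightarrow> real"
  assumes "ereal a \<le> (SUP w\<in>{w. w \<noteq> 0}. ereal (f w / n w))"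
    and "\<And>w. w \<noteq> 0 \<Longrightarrow> 0 < n w" and "\<And>w. w \<noteq> 0 \<Longrightarrow> f w \<le> K * n w"
  shows "a \<le> K"
proof -
  have "(SUP w\<in>{w. w \<noteq> 0}. ereal (f w / n w)) \<le> ereal K"
    using assms(2,3) by (intro SUP_least) (simp add: divide_le_eq)
  with assms(1) have "ereal a \<le> ereal K" by (rule order_trans)
  then show ?thesis by simp
qed

locale inf_sup_form =
  H1: complex_hilbert_space s1 ip1 + H2: complex_hilbert_space s2 ip2
  for s1 :: "complex \<Rightarrow> 'h1::ab_group_add \<Rightarrow> 'h1" and ip1
    and s2 :: "complex \<Rightarrow> 'h2::ab_group_add \<Rightarrow> 'h2" and ip2 +
  fixes B :: "'h1 \<Rightarrow> 'h2 \<Rightarrow> complex" and lam :: real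
  assumes bounded_bilinear_B: "bounded_bilinear_form s1 (hnorm ip1) s2 (hnorm ip2) B"
    and lam_pos: "0 < lam"
    and inf_sup_right: "\<And>v. ereal (lam * hnorm ip2 v)
                      \<le> (SUP w\<in>{w. w \<noteq> 0}. ereal (cmod (B w v) / hnorm ip1 w))"
    and inf_sup_left: "\<And>u. ereal (lam * hnorm ip1 u)
                      \<le> (SUP w\<in>{w. w \<noteq> 0}. ereal (cmod (B u w) / hnorm ip2 w))"
begin

lemma B_linear_right: "Vector_Spaces.linear s2 (*) (B u)"
  and B_linear_left: "Vector_Spaces.linear s1 (*) (\<lambda>u. B u v)"
  and B_bounded: "\<exists>C. \<forall>u v. cmod (B u v) \<le> C * hnorm ip1 u * hnorm ip2 v"
  using bounded_bilinear_B unfolding bounded_bilinear_form_def by blast+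

lemmas B_add_right = module_hom.add[OF module_hom_linearI[OF B_linear_right]]
  and B_diff_right = module_hom.diff[OF module_hom_linearI[OF B_linear_right]]
  and B_scale_right = module_hom.scale[OF module_hom_linearI[OF B_linear_right]]

lemma inf_sup_right_bound:
  "(\<And>w. cmod (B w v) \<le> K * hnorm ip1 w) \<Longrightarrow> lam * hnorm ip2 v \<le> K"
  by (rule SUP_ratio_le[OF inf_sup_right]) (simp_all add: H1.hnorm_pos)

lemma inf_sup_left_bound:
  "(\<And>w. cmod (B u w) \<le> K * hnorm ip2 w) \<Longrightarrow> lam * hnorm ip1 u \<le> K"
  by (rule SUP_ratio_le[OF inf_sup_left]) (simp_all add: H2.hnorm_pos)

lemma B_right_unique:
  assumes "\<And>\<phi>. B \<phi> u = B \<phi> u'"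
  shows "u = u'"
proof -
  have "lam * hnorm ip2 (u - u') \<le> 0"
    by (rule inf_sup_right_bound) (simp add: B_diff_right assms)
  then show ?thesis
    using lam_pos H2.hnorm_nonneg[of "u - u'"] by (simp add: mult_le_0_iff)
qed

text \<open>The range of the operator \<open>A : H\<^sub>2 \<rightarrow> H\<^sub>1\<close> defined by \<open>\<langle>\<phi>, A v\<rangle> = B(\<phi>, v)\<close>.\<close>
definition operator_range :: "'h1 set" where
  "operator_range = {k. \<exists>v. \<forall>\<phi>. B \<phi> v = ip1 \<phi> k}"

lemma closed_subspace_operator_range: "H1.closed_subspace operator_range"
proof -
  obtain CB where CB: "\<And>u v. cmod (B u v) \<le> CB * hnorm ip1 u * hnorm ip2 v"
    using B_bounded by blast
  have closed: "l \<in> operator_range"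
    if X: "\<forall>n. X n \<in> operator_range" and lim: "(\<lambda>n. hnorm ip1 (X n - l)) \<longlonglongrightarrow> 0" for X l
  proof -
    have "\<forall>n. \<exists>v. \<forall>\<phi>. B \<phi> v = ip1 \<phi> (X n)"
      using X unfolding operator_range_def by blast
    then obtain V where V: "\<And>n \<phi>. B \<phi> (V n) = ip1 \<phi> (X n)"
      by (auto dest!: choice)
    have V_diff: "lam * hnorm ip2 (V m - V n) \<le> hnorm ip1 (X m - X n)" for m n
    proof (rule inf_sup_right_bound)
      fix w
      have "B w (V m - V n) = ip1 w (X m - X n)" by (simp add: B_diff_right V H1.inner_diff_right)
      then show "cmod (B w (V m - V n)) \<le> hnorm ip1 (X m - X n) * hnorm ip1 w"
        using H1.Cauchy_Schwarz[of w "X m - X n"] by (simp add: mult.commute)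
    qed
    have "\<forall>e>0. \<exists>N. \<forall>m\<ge>N. \<forall>n\<ge>N. hnorm ip2 (V m - V n) < e"
    proof (intro allI impI)
      fix e :: real assume "e > 0"
      then obtain N where N: "\<forall>m\<ge>N. \<forall>n\<ge>N. hnorm ip1 (X m - X n) < lam * e"
        using H1.convergent_imp_Cauchy[OF lim] lam_pos \<open>e > 0\<close> by (meson mult_pos_pos)
      have "hnorm ip2 (V m - V n) < e" if "N \<le> m" "N \<le> n" for m n
        using V_diff[of m n] N that lam_pos by (smt (verit) mult_less_cancel_left_pos)
      then show "\<exists>N. \<forall>m\<ge>N. \<forall>n\<ge>N. hnorm ip2 (V m - V n) < e" by blast
    qed
    then obtain v where "(\<lambda>n. hnorm ip2 (V n - v)) \<longlonglongrightarrow> 0"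
      using H2.Cauchy_hnorm_convergent by blast
    have "B \<phi> v = ip1 \<phi> l" for \<phi>
    proof (rule LIMSEQ_unique)
      show "(\<lambda>n. B \<phi> (V n)) \<longlonglongrightarrow> B \<phi> v"
        using CB[of \<phi>] B_add_right
        by (intro H2.tendsto_bounded_additive[of _ "CB * hnorm ip1 \<phi>"])
           (simp_all add: additive_def \<open>(\<lambda>n. hnorm ip2 (V n - v)) \<longlonglongrightarrow> 0\<close>)
      show "(\<lambda>n. B \<phi> (V n)) \<longlonglongrightarrow> ip1 \<phi> l"
        unfolding V using H1.Cauchy_Schwarz[of \<phi>]
        by (intro H1.tendsto_bounded_additive[OF H1.additive_inner_right, of _ "hnorm ip1 \<phi>"] lim)
           (simp add: mult.commute)
    qed
    then show ?thesis unfolding operator_range_def by blast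
  qed
  have "0 \<in> operator_range"
    unfolding operator_range_def by (auto intro!: exI[of _ 0] module_hom.zero[OF module_hom_linearI[OF B_linear_right]])
  moreover have "x + y \<in> operator_range" if "x \<in> operator_range" "y \<in> operator_range" for x y
    using that unfolding operator_range_def
    by (auto simp: H1.inner_add_right) (metis B_add_right)
  moreover have "s1 c x \<in> operator_range" if "x \<in> operator_range" for c x
    using that unfolding operator_range_def
    by (auto simp: H1.inner_scale_right) (metis B_scale_right)
  ultimately show ?thesis using closed unfolding H1.closed_subspace_def by blast
qed

theorem Babuska_Lax_Milgram:
  assumes lin: "Vector_Spaces.linear s1 (*) H" and bound: "\<And>x. cmod (H x) \<le> C * hnorm ip1 x"
  shows "\<exists>u. \<forall>\<phi>. B \<phi> u = H \<phi>"
proof -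
  obtain h where h: "\<And>x. H x = ip1 x h" using H1.Riesz_representation[OF lin bound] by blast
  obtain m where "m \<in> operator_range" and orth: "\<And>k. k \<in> operator_range \<Longrightarrow> ip1 (h - m) k = 0"
    using H1.orthogonal_projection_exists[OF closed_subspace_operator_range] by blast
  obtain CB where CB: "\<And>u v. cmod (B u v) \<le> CB * hnorm ip1 u * hnorm ip2 v"
    using B_bounded by blast
  have "B (h - m) w = 0" for w
  proof -
    obtain r where r: "\<And>x. B x w = ip1 x r"
      using H1.Riesz_representation[OF B_linear_left[of w], of "CB * hnorm ip2 w"] CB
      by (auto simp: algebra_simps)
    then have "r \<in> operator_range" unfolding operator_range_def by blast
    then show ?thesis using orth r by simp
  qed
  then have "lam * hnorm ip1 (h - m) \<le> 0" by (intro inf_sup_left_bound) simp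
  then have "h = m" using lam_pos H1.hnorm_nonneg[of "h - m"] by (simp add: mult_le_0_iff)
  then show ?thesis using \<open>m \<in> operator_range\<close> h unfolding operator_range_def by auto
qed

lemma newton_pot_eq:
  assumes "Vector_Spaces.linear s1 (*) H" and "\<And>x. cmod (H x) \<le> C * hnorm ip1 x"
  shows "B \<phi> (newton_pot B H) = H \<phi>"
proof -
  have "\<exists>!u. \<forall>\<phi>. B \<phi> u = H \<phi>"
    using Babuska_Lax_Milgram[OF assms] B_right_unique by metis
  from theI'[OF this] show ?thesis unfolding newton_pot_def by blast
qed

lemma newton_pot_bilinear_form:
  assumes "bounded_bilinear_form s1 (hnorm ip1) s2 (hnorm ip2) A"
  shows "B \<phi> (newton_pot B (\<lambda>\<psi>. A \<psi> v)) = A \<phi> v"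
proof -
  obtain C where "\<And>u. cmod (A u v) \<le> C * hnorm ip1 u * hnorm ip2 v"
    using assms unfolding bounded_bilinear_form_def by blast
  moreover have "Vector_Spaces.linear s1 (*) (\<lambda>\<psi>. A \<psi> v)"
    using assms unfolding bounded_bilinear_form_def by blast
  ultimately show ?thesis
    by (intro newton_pot_eq[of _ "C * hnorm ip2 v"]) (simp_all add: algebra_simps)
qed

lemma single_layer_eq:
  assumes "in_N2 s1 ip1 Tr g"
  shows "B \<phi> (single_layer B Tr g) = g (Tr \<phi>)"
proof -
  obtain C where "\<And>\<psi>. cmod (g (Tr \<psi>)) \<le> C * hnorm ip1 \<psi>"
    using H1.in_N2_bounded[OF assms] by blast
  then have "B \<phi> (newton_pot B (\<lambda>\<psi>. g (Tr \<psi>))) = g (Tr \<phi>)"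
    by (rule newton_pot_eq[OF H1.in_N2_linear[OF assms]])
  then show ?thesis by (simp add: single_layer_def newton_pot_def)
qed

end

section \<open>Layer potentials and their jump relations\<close>

lemma conormal_apply:
  assumes "\<And>\<phi> \<psi>. Tr \<phi> = Tr \<psi> \<Longrightarrow> BO (r \<phi>) u = BO (r \<psi>) u"
  shows "conormal BO r Tr u (Tr \<phi>) = BO (r \<phi>) u"
proof -
  define G where "G x = (if x \<in> range Tr then BO (r (SOME \<phi>. Tr \<phi> = x)) u else 0)" for x
  have G: "(\<forall>\<phi>. G (Tr \<phi>) = BO (r \<phi>) u) \<and> (\<forall>x. x \<notin> range Tr \<longrightarrow> G x = 0)"
  proof (intro conjI allI impI)
    fix \<phi>
    have "Tr (SOME \<psi>. Tr \<psi> = Tr \<phi>) = Tr \<phi>" by (rule someI) (rule refl)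
    then have "BO (r (SOME \<psi>. Tr \<psi> = Tr \<phi>)) u = BO (r \<phi>) u" by (rule assms)
    then show "G (Tr \<phi>) = BO (r \<phi>) u" unfolding G_def by simp
  qed (simp add: G_def)
  have "\<exists>!g. (\<forall>\<phi>. g (Tr \<phi>) = BO (r \<phi>) u) \<and> (\<forall>x. x \<notin> range Tr \<longrightarrow> g x = 0)"
  proof (rule ex1I[of _ G])
    fix g assume g: "(\<forall>\<phi>. g (Tr \<phi>) = BO (r \<phi>) u) \<and> (\<forall>x. x \<notin> range Tr \<longrightarrow> g x = 0)"
    show "g = G"
    proof
      fix x show "g x = G x" using g G by (cases "x \<in> range Tr") auto
    qed
  qed (fact G)
  from theI'[OF this] show ?thesis unfolding conormal_def by blast
qed

definition glues :: "('h \<Rightarrow> 'd) \<Rightarrow> ('h \<Rightarrow> 'o) \<Rightarrow> ('h \<Rightarrow> 'c) \<Rightarrow> bool" where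
  "glues Tr rO rC \<longleftrightarrow>
     (\<forall>\<phi> \<psi>. Tr \<phi> = Tr \<psi> \<longrightarrow> (\<exists>w. rO w = rO \<phi> \<and> rC w = rC \<psi> \<and> Tr w = Tr \<phi>))"

lemma glues_sym: "glues Tr rO rC \<Longrightarrow> glues Tr rC rO"
  unfolding glues_def by metis

lemma glues_determined_by_trace:
  assumes "glues Tr rO rC" and "\<And>\<phi>. P (rO \<phi>) = G (Tr \<phi>) + Q (rC \<phi>)" and "Tr \<phi> = Tr \<psi>"
  shows "P (rO \<phi>) = P (rO \<psi>)"
proof -
  obtain w where "rO w = rO \<phi>" "rC w = rC \<psi>" "Tr w = Tr \<phi>"
    using assms(1,3) unfolding glues_def by blast
  then show ?thesis using assms(2)[of w] assms(2)[of \<psi>] assms(3) by simp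
qed

lemma conormal_apply_glued:
  assumes "glues Tr rO rC" and "\<And>\<phi>. BO (rO \<phi>) u = G (Tr \<phi>) + Q (rC \<phi>)"
  shows "conormal BO rO Tr u (Tr \<phi>) = BO (rO \<phi>) u"
  by (rule conormal_apply) (rule glues_determined_by_trace[where P = "\<lambda>a. BO a u", OF assms])

lemma bounded_op_additive: "bounded_op s1 n1 s2 n2 T \<Longrightarrow> additive T"
  by (simp add: bounded_op_def additive_def Vector_Spaces.linear_iff)

locale transmission_form = inf_sup_form s1 ip1 s2 ip2 B lam
  for s1 :: "complex \<Rightarrow> 'h1::ab_group_add \<Rightarrow> 'h1" and ip1
    and s2 :: "complex \<Rightarrow> 'h2::ab_group_add \<Rightarrow> 'h2" and ip2 and B lam +
  fixes Tr1 :: "'h1 \<Rightarrow> 'd1" and rO1 :: "'h1 \<Rightarrow> 'o1" and rC1 :: "'h1 \<Rightarrow> 'c1"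
    and rO2 :: "'h2 \<Rightarrow> 'o2::ab_group_add" and rC2 :: "'h2 \<Rightarrow> 'c2::ab_group_add"
    and BO :: "'o1 \<Rightarrow> 'o2 \<Rightarrow> complex" and BC :: "'c1 \<Rightarrow> 'c2 \<Rightarrow> complex"
  assumes bounded_BO: "bounded_bilinear_form s1 (hnorm ip1) s2 (hnorm ip2) (\<lambda>F G. BO (rO1 F) (rO2 G))"
    and bounded_BC: "bounded_bilinear_form s1 (hnorm ip1) s2 (hnorm ip2) (\<lambda>F G. BC (rC1 F) (rC2 G))"
    and B_split: "B u v = BO (rO1 u) (rO2 v) + BC (rC1 u) (rC2 v)"
    and glues_Tr1: "glues Tr1 rO1 rC1"
begin

lemma BO_linear_right: "Vector_Spaces.linear s2 (*) (\<lambda>G. BO (rO1 u) (rO2 G))"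
  and BC_linear_right: "Vector_Spaces.linear s2 (*) (\<lambda>G. BC (rC1 u) (rC2 G))"
  using bounded_BO bounded_BC unfolding bounded_bilinear_form_def by blast+

lemmas BO_diff_right = module_hom.diff[OF module_hom_linearI[OF BO_linear_right]]
  and BC_diff_right = module_hom.diff[OF module_hom_linearI[OF BC_linear_right]]

lemma newton_pot_L_ind_O: "B \<phi> (newton_pot B (L_ind BO rO1 (rO2 F))) = BO (rO1 \<phi>) (rO2 F)"
  using newton_pot_bilinear_form[OF bounded_BO] by (simp add: L_ind_def)

lemma newton_pot_L_ind_C: "B \<phi> (newton_pot B (L_ind BC rC1 (rC2 F))) = BC (rC1 \<phi>) (rC2 F)"
  using newton_pot_bilinear_form[OF bounded_BC] by (simp add: L_ind_def)

lemma newton_pot_L_ind_sum: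
  "newton_pot B (L_ind BO rO1 (rO2 F)) + newton_pot B (L_ind BC rC1 (rC2 F)) = F"
  by (rule B_right_unique) (simp add: B_add_right newton_pot_L_ind_O newton_pot_L_ind_C B_split[of _ F])

lemma trace_double_layer_sum:
  assumes "additive Tr2" and "f \<in> range Tr2"
  shows "trace_double_layer B BO rO1 rO2 Tr2 f + trace_double_layer B BC rC1 rC2 Tr2 f = - f"
proof -
  define F where "F = (SOME F. Tr2 F = f)"
  define PO where "PO = newton_pot B (L_ind BO rO1 (rO2 F))"
  define PC where "PC = newton_pot B (L_ind BC rC1 (rC2 F))"
  have "Tr2 F = f" using assms(2) someI_ex[of "\<lambda>F. Tr2 F = f"] by (auto simp: F_def)
  have "Tr2 PO + Tr2 PC = Tr2 F"
    unfolding PO_def PC_def additive.add[OF assms(1), symmetric] newton_pot_L_ind_sum ..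
  have "trace_double_layer B BO rO1 rO2 Tr2 f + trace_double_layer B BC rC1 rC2 Tr2 f
      = (Tr2 PO + Tr2 PC) - Tr2 F - Tr2 F"
    by (simp add: trace_double_layer_def Let_def F_def[symmetric] PO_def PC_def algebra_simps)
  also have "\<dots> = - f" using \<open>Tr2 PO + Tr2 PC = Tr2 F\<close> \<open>Tr2 F = f\<close> by simp
  finally show ?thesis .
qed

lemma conormal_single_layer_sum:
  assumes "in_N2 s1 ip1 Tr1 g"
  defines "S \<equiv> single_layer B Tr1 g"
  shows "conormal BO rO1 Tr1 (rO2 S) (Tr1 \<phi>) + conormal BC rC1 Tr1 (rC2 S) (Tr1 \<phi>) = g (Tr1 \<phi>)"
proof -
  have split: "g (Tr1 \<phi>) = BO (rO1 \<phi>) (rO2 S) + BC (rC1 \<phi>) (rC2 S)" for \<phi>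
    using single_layer_eq[OF assms(1), of \<phi>] B_split by (simp add: S_def)
  have "conormal BO rO1 Tr1 (rO2 S) (Tr1 \<phi>) = BO (rO1 \<phi>) (rO2 S)"
    by (rule conormal_apply_glued[OF glues_Tr1,
          where G = g and Q = "\<lambda>c. - BC c (rC2 S)"])
       (simp add: split)
  moreover have "conormal BC rC1 Tr1 (rC2 S) (Tr1 \<phi>) = BC (rC1 \<phi>) (rC2 S)"
    by (rule conormal_apply_glued[OF glues_sym[OF glues_Tr1],
          where G = g and Q = "\<lambda>c. - BO c (rO2 S)"])
       (simp add: split)
  ultimately show ?thesis using split by simp
qed

lemma conormal_double_layer_jump:
  assumes "additive rO2" and "additive rC2"
  shows "conormal BO rO1 Tr1 (double_layer B BO rO1 rO2 Tr2 f) (Tr1 \<phi>)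
       = conormal BC rC1 Tr1 (double_layer B BC rC1 rC2 Tr2 f) (Tr1 \<phi>)"
proof -
  define F where "F = (SOME F. Tr2 F = f)"
  define PO where "PO = newton_pot B (L_ind BO rO1 (rO2 F))"
  define PC where "PC = newton_pot B (L_ind BC rC1 (rC2 F))"
  have DO: "double_layer B BO rO1 rO2 Tr2 f = rO2 (PO - F)"
    by (simp add: double_layer_def Let_def F_def[symmetric] PO_def[symmetric] additive.diff[OF assms(1)])
  have DC: "double_layer B BC rC1 rC2 Tr2 f = rC2 (PC - F)"
    by (simp add: double_layer_def Let_def F_def[symmetric] PC_def[symmetric] additive.diff[OF assms(2)])
  have BO_F: "BO (rO1 \<phi>) (rO2 F) = BO (rO1 \<phi>) (rO2 PO) + BC (rC1 \<phi>) (rC2 PO)" for \<phi>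
    using newton_pot_L_ind_O[of \<phi> F] B_split[of \<phi> PO] by (simp add: PO_def)
  have BC_F: "BC (rC1 \<phi>) (rC2 F) = BO (rO1 \<phi>) (rO2 PC) + BC (rC1 \<phi>) (rC2 PC)" for \<phi>
    using newton_pot_L_ind_C[of \<phi> F] B_split[of \<phi> PC] by (simp add: PC_def)
  have flux_O: "BO (rO1 \<phi>) (rO2 (PO - F)) = - BC (rC1 \<phi>) (rC2 PO)" for \<phi>
    by (simp add: BO_diff_right BO_F)
  have flux_C: "BC (rC1 \<phi>) (rC2 (PC - F)) = - BO (rO1 \<phi>) (rO2 PC)" for \<phi>
    by (simp add: BC_diff_right BC_F)
  txt \<open>As the two potentials add up to \<open>F\<close>, each has the same flux through the other subdomain.\<close>
  have flux_exchange: "BO (rO1 \<phi>) (rO2 PC) = BC (rC1 \<phi>) (rC2 PO)" for \<phi>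
  proof -
    have "PC = F - PO"
      using newton_pot_L_ind_sum[of F, folded PO_def PC_def] by (simp add: eq_diff_eq add.commute)
    then show ?thesis by (simp add: BO_diff_right BO_F)
  qed
  have "conormal BO rO1 Tr1 (rO2 (PO - F)) (Tr1 \<phi>) = BO (rO1 \<phi>) (rO2 (PO - F))"
    by (rule conormal_apply_glued[OF glues_Tr1,
          where G = "\<lambda>_. 0" and Q = "\<lambda>c. - BC c (rC2 PO)"])
       (simp add: flux_O)
  moreover have "conormal BC rC1 Tr1 (rC2 (PC - F)) (Tr1 \<phi>) = BC (rC1 \<phi>) (rC2 (PC - F))"
    by (rule conormal_apply_glued[OF glues_sym[OF glues_Tr1],
          where G = "\<lambda>_. 0" and Q = "\<lambda>c. - BO c (rO2 PC)"])
       (simp add: flux_C)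
  ultimately show ?thesis by (simp add: DO DC flux_O flux_C flux_exchange)
qed

end

theorem lemma5p4:
  fixes s1 :: "complex \<Rightarrow> 'h1::ab_group_add \<Rightarrow> 'h1" and ip1 :: "'h1 \<Rightarrow> 'h1 \<Rightarrow> complex"
    and s2 :: "complex \<Rightarrow> 'h2::ab_group_add \<Rightarrow> 'h2" and ip2 :: "'h2 \<Rightarrow> 'h2 \<Rightarrow> complex"
    and sO1 :: "complex \<Rightarrow> 'o1::ab_group_add \<Rightarrow> 'o1" and nO1 :: "'o1 \<Rightarrow> real"
    and sC1 :: "complex \<Rightarrow> 'c1::ab_group_add \<Rightarrow> 'c1" and nC1 :: "'c1 \<Rightarrow> real"
    and sD1 :: "complex \<Rightarrow> 'd1::ab_group_add \<Rightarrow> 'd1" and nD1 :: "'d1 \<Rightarrow> real"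
    and sO2 :: "complex \<Rightarrow> 'o2::ab_group_add \<Rightarrow> 'o2" and nO2 :: "'o2 \<Rightarrow> real"
    and sC2 :: "complex \<Rightarrow> 'c2::ab_group_add \<Rightarrow> 'c2" and nC2 :: "'c2 \<Rightarrow> real"
    and sD2 :: "complex \<Rightarrow> 'd2::ab_group_add \<Rightarrow> 'd2" and nD2 :: "'d2 \<Rightarrow> real"
    and Tr1 :: "'h1 \<Rightarrow> 'd1" and rO1 :: "'h1 \<Rightarrow> 'o1" and rC1 :: "'h1 \<Rightarrow> 'c1"
    and Tr2 :: "'h2 \<Rightarrow> 'd2" and rO2 :: "'h2 \<Rightarrow> 'o2" and rC2 :: "'h2 \<Rightarrow> 'c2"
    and B :: "'h1 \<Rightarrow> 'h2 \<Rightarrow> complex"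
    and BO :: "'o1 \<Rightarrow> 'o2 \<Rightarrow> complex" and BC :: "'c1 \<Rightarrow> 'c2 \<Rightarrow> complex"
    and lam :: real
  assumes H1: "complex_hilbert s1 ip1" and H2: "complex_hilbert s2 ip2"
    and sn: "seminormed sO1 nO1" "seminormed sC1 nC1" "seminormed sD1 nD1"
            "seminormed sO2 nO2" "seminormed sC2 nC2" "seminormed sD2 nD2"
    and ops: "bounded_op s1 (hnorm ip1) sD1 nD1 Tr1"
             "bounded_op s1 (hnorm ip1) sO1 nO1 rO1"
             "bounded_op s1 (hnorm ip1) sC1 nC1 rC1"
             "bounded_op s2 (hnorm ip2) sD2 nD2 Tr2"
             "bounded_op s2 (hnorm ip2) sO2 nO2 rO2"
             "bounded_op s2 (hnorm ip2) sC2 nC2 rC2"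
    and B_bdd: "bounded_bilinear_form s1 (hnorm ip1) s2 (hnorm ip2) B"
    and BO_bdd: "bounded_bilinear_form s1 (hnorm ip1) s2 (hnorm ip2) (\<lambda>F G. BO (rO1 F) (rO2 G))"
    and BC_bdd: "bounded_bilinear_form s1 (hnorm ip1) s2 (hnorm ip2) (\<lambda>F G. BC (rC1 F) (rC2 G))"
    and lam_pos: "lam > 0"
    and infsup1: "\<And>v. ereal (lam * hnorm ip2 v)
                      \<le> (SUP w\<in>{w. w \<noteq> 0}. ereal (cmod (B w v) / hnorm ip1 w))"
    and infsup2: "\<And>u. ereal (lam * hnorm ip1 u)
                      \<le> (SUP w\<in>{w. w \<noteq> 0}. ereal (cmod (B u w) / hnorm ip2 w))"
    and split: "\<And>u v. B u v = BO (rO1 u) (rO2 v) + BC (rC1 u) (rC2 v)"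
    and glue1: "\<And>\<phi> \<psi>. Tr1 \<phi> = Tr1 \<psi> \<Longrightarrow>
                  \<exists>w. rO1 w = rO1 \<phi> \<and> rC1 w = rC1 \<psi> \<and> Tr1 w = Tr1 \<phi>"
    and glue2: "\<And>\<phi> \<psi>. Tr2 \<phi> = Tr2 \<psi> \<Longrightarrow>
                  \<exists>w. rO2 w = rO2 \<phi> \<and> rC2 w = rC2 \<psi> \<and> Tr2 w = Tr2 \<phi>"
  shows "(\<forall>f\<in>range Tr2.
            trace_double_layer B BO rO1 rO2 Tr2 f + trace_double_layer B BC rC1 rC2 Tr2 f = - f)
       \<and> (\<forall>g. in_N2 s1 ip1 Tr1 g \<longrightarrow>
            (\<forall>x\<in>range Tr1.
               conormal BO rO1 Tr1 (rO2 (single_layer B Tr1 g)) x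
             + conormal BC rC1 Tr1 (rC2 (single_layer B Tr1 g)) x = g x))
       \<and> (\<forall>f\<in>range Tr2. \<forall>x\<in>range Tr1.
               conormal BO rO1 Tr1 (double_layer B BO rO1 rO2 Tr2 f) x
             - conormal BC rC1 Tr1 (double_layer B BC rC1 rC2 Tr2 f) x = 0)
       \<and> (\<forall>TrO TrC. partial_trace s2 ip2 rO2 sD2 Tr2 TrO \<and> partial_trace s2 ip2 rC2 sD2 Tr2 TrC \<longrightarrow>
            (\<forall>g. in_N2 s1 ip1 Tr1 g \<longrightarrow>
               TrO (rO2 (single_layer B Tr1 g)) - TrC (rC2 (single_layer B Tr1 g)) = 0))"
proof -
  interpret transmission_form s1 ip1 s2 ip2 B lam Tr1 rO1 rC1 rO2 rC2 BO BC
    using H1 H2 B_bdd lam_pos infsup1 infsup2 BO_bdd BC_bdd split glue1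
    by unfold_locales (auto simp: glues_def)
  have additive: "additive Tr2" "additive rO2" "additive rC2"
    using ops(4-6) by (auto intro: bounded_op_additive)
  show ?thesis
  proof (intro conjI ballI allI impI)
    show "trace_double_layer B BO rO1 rO2 Tr2 f + trace_double_layer B BC rC1 rC2 Tr2 f = - f"
      if "f \<in> range Tr2" for f
      using trace_double_layer_sum[OF additive(1) that] .
    show "conormal BO rO1 Tr1 (rO2 (single_layer B Tr1 g)) x
        + conormal BC rC1 Tr1 (rC2 (single_layer B Tr1 g)) x = g x"
      if "in_N2 s1 ip1 Tr1 g" and "x \<in> range Tr1" for g x
      using that conormal_single_layer_sum by blast
    show "conormal BO rO1 Tr1 (double_layer B BO rO1 rO2 Tr2 f) x
        - conormal BC rC1 Tr1 (double_layer B BC rC1 rC2 Tr2 f) x = 0"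
      if "x \<in> range Tr1" for f x
      using that conormal_double_layer_jump[OF additive(2,3)] by auto
    show "TrO (rO2 (single_layer B Tr1 g)) - TrC (rC2 (single_layer B Tr1 g)) = 0"
      if "partial_trace s2 ip2 rO2 sD2 Tr2 TrO \<and> partial_trace s2 ip2 rC2 sD2 Tr2 TrC" for TrO TrC g
      using that unfolding partial_trace_def by (metis diff_self)
  qed
qed

end
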